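(* Let $d=1$. There is a constant $c_1$ depending only on the dimension such that for all $N\ge1$, $$\text{i) } E_Q(Z(N)^2)\le \sum_{n=0}^N\left(c_1c^2_{N,1}N^{1/2}\right)^n,\qquad \text{ii) } E_Q(K(N)^2)\le N^2\sum_{n=0}^N\left(c_1c^2_{N,1}N^{1/2}\right)^n.$$
   Context: $P^N_0$ is the uniform probability measure on nearest-neighbour walks $\omega:\{0,\dots,N\}\to\mathbb{Z}$ with $\omega(0)=0$, $|\omega(n)-\omega(n-1)|=1$ (each of weight $2^{-N}$). The environment $h=\{h(n,x):n\in\mathbb{N},x\in\mathbb{Z}\}$ consists of i.i.d. random variables with $h(n,x)=\pm1$ each with probability $1/2$ on a probability space $(H,\mathcal{G},Q)$, independent of the walk; $E_Q$ is expectation under $Q$. $(c_{N,1})$ is a sequence of positive numbers with $\lim_{N\to\infty}c_{N,1}^2N^{1/2}=0$. $Z(N)=\int\prod_{n=1}^N[1+c_{N,1}h(n,\omega(n))]\,dP^N_0(\omega)$ and $K(N)=\int\prod_{n=1}^N[1+c_{N,1}h(n,\omega(n))]\,\omega(N)^2\,dP^N_0(\omega)$. *)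

theory Defs
  imports "HOL-Probability.Probability"
begin

text \<open>Nearest-neighbour walks of length N on Z started at 0, extended by 0 after time N
  (so the set is finite and in bijection with walks on {0..N}).\<close>
definition walks :: "nat \<Rightarrow> (nat \<Rightarrow> int) set" where
  "walks N = {w. w 0 = 0 \<and> (\<forall>n\<in>{1..N}. \<bar>w n - w (n - 1)\<bar> = 1) \<and> (\<forall>n>N. w n = 0)}"

definition walk_integral :: "nat \<Rightarrow> ((nat \<Rightarrow> int) \<Rightarrow> real) \<Rightarrow> real" where
  "walk_integral N F = (\<Sum>w\<in>walks N. F w / 2 ^ N)"

definition Zpart :: "(nat \<Rightarrow> real) \<Rightarrow> (nat \<times> int \<Rightarrow> 'q \<Rightarrow> real) \<Rightarrow> nat \<Rightarrow> 'q \<Rightarrow> real" where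
  "Zpart c h N q = walk_integral N (\<lambda>w. \<Prod>n\<in>{1..N}. 1 + c N * h (n, w n) q)"

definition Kpart :: "(nat \<Rightarrow> real) \<Rightarrow> (nat \<times> int \<Rightarrow> 'q \<Rightarrow> real) \<Rightarrow> nat \<Rightarrow> 'q \<Rightarrow> real" where
  "Kpart c h N q = walk_integral N (\<lambda>w. (\<Prod>n\<in>{1..N}. 1 + c N * h (n, w n) q) * real_of_int (w N) ^ 2)"

end

theory Submission
  imports Defs
begin

(* Both second moments are averages over pairs (w, w') of independent walks. Independence of the
   environment gives E[F_w F_w'] = (1 + c^2)^L, where F_w is the weight of w and L the number of
   times at which w and w' meet. Expanding, E Z^2 is the pair average of sum_k c^(2k) (L choose k),
   and splitting at the first of k chosen meeting times (a renewal argument for the difference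
   walk) bounds the average of (L choose k) by (sum_(m<=N) P(w m = w' m))^k <= (2 sqrt N)^k, since
   P(w m = w' m) = (2m choose m) / 4^m <= 1 / sqrt m.
   For K, the pair average of w(N)^2 w'(N)^2 alone is N^2; the remainder
   ((1 + c^2)^L - 1) w(N)^2 w'(N)^2 is bounded by Cauchy-Schwarz, since the second moment of
   (1 + c^2)^L - 1 is O((c^2 sqrt N)^2) when c^2 sqrt N < 1. When c^2 sqrt N >= 1 the crude
   bound w(N)^2 <= N^2 suffices. *)

section \<open>Averages over walks\<close>

definition walk_cons :: "nat \<Rightarrow> int \<Rightarrow> (nat \<Rightarrow> int) \<Rightarrow> nat \<Rightarrow> int" where
  "walk_cons N s w n = (if n = 0 then 0 else if n \<le> Suc N then s + w (n - 1) else 0)"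

lemma walks_0: "walks 0 = {\<lambda>_. 0}"
  by (auto simp: walks_def fun_eq_iff) (metis gr0I)

lemma walk_cons_in_walks:
  assumes s: "s \<in> {-1, 1}" and w: "w \<in> walks N"
  shows "walk_cons N s w \<in> walks (Suc N)"
proof -
  have "\<bar>walk_cons N s w n - walk_cons N s w (n - 1)\<bar> = 1" if n: "n \<in> {1..Suc N}" for n
  proof (cases "n = 1")
    case True
    then show ?thesis using s w by (auto simp: walk_cons_def walks_def)
  next
    case False
    then have "n - 1 \<in> {1..N}" using n by auto
    then have "\<bar>w (n - 1) - w (n - 1 - 1)\<bar> = 1" using w unfolding walks_def by blast
    then show ?thesis using n False by (auto simp: walk_cons_def)
  qed
  then show ?thesis by (auto simp: walks_def walk_cons_def)
qed

lemma walks_Suc: "walks (Suc N) = (\<lambda>(s, w). walk_cons N s w) ` ({-1, 1} \<times> walks N)"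
proof (intro equalityI subsetI)
  fix v assume v: "v \<in> walks (Suc N)"
  have v0: "v 0 = 0" and step: "\<And>n. n \<in> {1..Suc N} \<Longrightarrow> \<bar>v n - v (n - 1)\<bar> = 1"
    and vz: "\<And>n. n > Suc N \<Longrightarrow> v n = 0"
    using v by (auto simp: walks_def)
  define w where "w m = (if m \<le> N then v (Suc m) - v 1 else 0)" for m
  have s: "v 1 \<in> {-1, 1}" using step[of 1] v0 by auto
  have "\<bar>w n - w (n - 1)\<bar> = 1" if "n \<in> {1..N}" for n
    using step[of "Suc n"] that by (auto simp: w_def)
  then have "w \<in> walks N" by (auto simp: walks_def w_def)
  moreover have "v = walk_cons N (v 1) w"
    by (rule ext) (auto simp: walk_cons_def w_def v0 vz not_le)
  ultimately show "v \<in> (\<lambda>(s, w). walk_cons N s w) ` ({-1, 1} \<times> walks N)" using s by force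
qed (auto intro: walk_cons_in_walks)

lemma inj_on_walk_cons: "inj_on (\<lambda>(s, w). walk_cons N s w) ({-1, 1} \<times> walks N)"
proof (rule inj_onI, clarify)
  fix s w s' w'
  assume ws: "w \<in> walks N" "w' \<in> walks N" and eq: "walk_cons N s w = walk_cons N s' w'"
  have "w 0 = 0" "w' 0 = 0" using ws by (auto simp: walks_def)
  then have "s = s'" using fun_cong[OF eq, of 1] by (simp add: walk_cons_def)
  moreover have "w m = w' m" for m
  proof (cases "m \<le> N")
    case True
    then show ?thesis using fun_cong[OF eq, of "Suc m"] \<open>s = s'\<close> by (simp add: walk_cons_def)
  qed (use ws in \<open>auto simp: walks_def\<close>)
  ultimately show "s = s' \<and> w = w'" by auto
qed

lemma card_walks: "card (walks N) = 2 ^ N"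
proof (induction N)
  case (Suc N)
  have "card (walks (Suc N)) = card ({-1, 1::int} \<times> walks N)"
    unfolding walks_Suc by (rule card_image[OF inj_on_walk_cons])
  then show ?case using Suc by (simp add: card_cartesian_product)
qed (simp add: walks_0)

lemma walk_cons_Suc [simp]: "walk_cons N s w (Suc N) = s + w N"
  by (simp add: walk_cons_def)

lemma abs_walk_le:
  assumes "w \<in> walks N" "n \<le> N"
  shows "\<bar>w n\<bar> \<le> int n"
  using assms(2)
proof (induction n)
  case (Suc n)
  then have "Suc n \<in> {1..N}" by simp
  then have "\<bar>w (Suc n) - w n\<bar> = 1" using assms(1) unfolding walks_def by fastforce
  then show ?case using Suc by auto
qed (use assms(1) in \<open>simp add: walks_def\<close>)

lemma walk_endpoint_sq_le: "w \<in> walks N \<Longrightarrow> real_of_int (w N) ^ 2 \<le> real N ^ 2"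
  using abs_walk_le[of w N N] by (simp add: abs_le_square_iff[symmetric])

lemma walk_integral_Suc:
  "walk_integral (Suc N) F =
     walk_integral N (\<lambda>w. (F (walk_cons N (-1) w) + F (walk_cons N 1 w)) / 2)"
proof -
  have "(\<Sum>v\<in>walks (Suc N). F v / 2 ^ Suc N)
      = (\<Sum>(s, w)\<in>{-1, 1} \<times> walks N. F (walk_cons N s w) / 2 ^ Suc N)"
    unfolding walks_Suc by (subst sum.reindex[OF inj_on_walk_cons]) (simp add: case_prod_beta')
  then show ?thesis
    by (simp add: walk_integral_def sum.cartesian_product[symmetric] sum.distrib add_divide_distrib)
qed

lemma walk_integral_const [simp]: "walk_integral N (\<lambda>_. a) = a"
  by (simp add: walk_integral_def card_walks)

lemma walk_integral_add:
  "walk_integral N (\<lambda>w. F w + G w) = walk_integral N F + walk_integral N G"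
  by (simp add: walk_integral_def sum.distrib add_divide_distrib)

lemma walk_integral_diff:
  "walk_integral N (\<lambda>w. F w - G w) = walk_integral N F - walk_integral N G"
  by (simp add: walk_integral_def sum_subtractf diff_divide_distrib)

lemma walk_integral_mult_left:
  "walk_integral N (\<lambda>w. a * F w) = a * walk_integral N F"
  by (simp add: walk_integral_def sum_distrib_left)

lemma walk_integral_mult_right:
  "walk_integral N (\<lambda>w. F w * a) = walk_integral N F * a"
  by (simp add: walk_integral_def sum_distrib_right)

lemma walk_integral_sum:
  "walk_integral N (\<lambda>w. \<Sum>i\<in>I. F i w) = (\<Sum>i\<in>I. walk_integral N (F i))"
  by (simp add: walk_integral_def sum_divide_distrib[symmetric] sum.swap[of _ I])

lemma walk_integral_divide:
  "walk_integral N (\<lambda>w. F w / a) = walk_integral N F / a"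
  by (simp add: walk_integral_def sum_divide_distrib[symmetric])

lemma walk_integral_mono:
  "(\<And>w. w \<in> walks N \<Longrightarrow> F w \<le> G w) \<Longrightarrow> walk_integral N F \<le> walk_integral N G"
  by (simp add: walk_integral_def sum_divide_distrib[symmetric] divide_right_mono sum_mono)

lemma walk_integral_cong:
  "(\<And>w. w \<in> walks N \<Longrightarrow> F w = G w) \<Longrightarrow> walk_integral N F = walk_integral N G"
  by (simp add: walk_integral_def)

lemma walk_integral_nonneg:
  "(\<And>w. w \<in> walks N \<Longrightarrow> 0 \<le> F w) \<Longrightarrow> 0 \<le> walk_integral N F"
  using walk_integral_mono[of N "\<lambda>_. 0" F] by simp

lemma walk_integral_endpoint_sq: "walk_integral N (\<lambda>w. real_of_int (w N) ^ 2) = real N"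
proof (induction N)
  case (Suc N)
  have "walk_integral (Suc N) (\<lambda>w. real_of_int (w (Suc N)) ^ 2)
      = walk_integral N (\<lambda>w. real_of_int (w N) ^ 2 + 1)"
    unfolding walk_integral_Suc
    by (rule walk_integral_cong) (simp add: power2_eq_square algebra_simps)
  then show ?case using Suc by (simp add: walk_integral_add)
qed (simp add: walk_integral_def walks_0)

lemma walk_integral_endpoint_pow4:
  "walk_integral N (\<lambda>w. real_of_int (w N) ^ 4) = 3 * real N ^ 2 - 2 * real N"
proof (induction N)
  case (Suc N)
  have "walk_integral (Suc N) (\<lambda>w. real_of_int (w (Suc N)) ^ 4)
      = walk_integral N (\<lambda>w. real_of_int (w N) ^ 4 + 6 * real_of_int (w N) ^ 2 + 1)"
    unfolding walk_integral_Suc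
    by (rule walk_integral_cong) (simp add: power4_eq_xxxx power2_eq_square algebra_simps)
  also have "\<dots> = walk_integral N (\<lambda>w. real_of_int (w N) ^ 4) + 6 * real N + 1"
    by (simp add: walk_integral_add walk_integral_mult_left walk_integral_endpoint_sq)
  finally show ?case using Suc by (simp add: power2_eq_square algebra_simps)
qed (simp add: walk_integral_def walks_0)

lemma walk_integral_Suc_pair:
  "walk_integral (Suc N) (\<lambda>w. walk_integral (Suc N) (f w)) =
     walk_integral N (\<lambda>w. walk_integral N (\<lambda>w'.
       (f (walk_cons N (-1) w) (walk_cons N (-1) w') + f (walk_cons N (-1) w) (walk_cons N 1 w')
      + f (walk_cons N 1 w) (walk_cons N (-1) w') + f (walk_cons N 1 w) (walk_cons N 1 w')) / 4))"
  by (simp add: walk_integral_Suc walk_integral_add[symmetric] walk_integral_divide[symmetric]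
      add_divide_distrib add.assoc)

section \<open>Collision counts and the renewal bound\<close>

definition collisions :: "nat \<Rightarrow> int \<Rightarrow> (nat \<Rightarrow> int) \<Rightarrow> (nat \<Rightarrow> int) \<Rightarrow> nat" where
  "collisions N d w w' = card {n\<in>{1..N}. w' n = w n + d}"

lemma collisions_le: "collisions N d w w' \<le> N"
proof -
  have "collisions N d w w' \<le> card {1..N}" unfolding collisions_def by (rule card_mono) auto
  then show ?thesis by simp
qed

lemma collisions_walk_cons:
  assumes "w \<in> walks N" "w' \<in> walks N"
  shows "collisions (Suc N) d (walk_cons N s w) (walk_cons N s' w') =
           of_bool (s' = s + d) + collisions N (d + s - s') w w'"
proof -
  have w0: "w 0 = 0" "w' 0 = 0" using assms by (auto simp: walks_def)
  let ?C = "\<lambda>m. w' m = w m + (d + s - s')"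
  have "{n\<in>{1..Suc N}. walk_cons N s' w' n = walk_cons N s w n + d} = Suc ` {m\<in>{0..N}. ?C m}"
  proof (intro equalityI subsetI)
    fix n assume "n \<in> {n\<in>{1..Suc N}. walk_cons N s' w' n = walk_cons N s w n + d}"
    then have "n = Suc (n - 1)" "n - 1 \<in> {m\<in>{0..N}. ?C m}" by (auto simp: walk_cons_def)
    then show "n \<in> Suc ` {m\<in>{0..N}. ?C m}" by (metis imageI)
  qed (auto simp: walk_cons_def)
  then have "collisions (Suc N) d (walk_cons N s w) (walk_cons N s' w') = card {m\<in>{0..N}. ?C m}"
    unfolding collisions_def by (simp add: card_image)
  also have "{m\<in>{0..N}. ?C m} = (if s' = s + d then insert 0 else id) {m\<in>{1..N}. ?C m}"
  proof -
    have "{0..N} = insert 0 {1..N}" by auto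
    moreover have "?C 0 \<longleftrightarrow> s' = s + d" using w0 by auto
    ultimately show ?thesis by auto
  qed
  also have "card \<dots> = of_bool (s' = s + d) + collisions N (d + s - s') w w'"
    by (simp add: collisions_def)
  finally show ?thesis .
qed

definition collision_moment :: "nat \<Rightarrow> nat \<Rightarrow> int \<Rightarrow> real" where
  "collision_moment k N d =
     walk_integral N (\<lambda>w. walk_integral N (\<lambda>w'. real (collisions N d w w' choose k)))"

lemma collision_moment_0 [simp]: "collision_moment 0 N d = 1"
  by (simp add: collision_moment_def)

lemma collision_moment_Suc_0 [simp]: "collision_moment (Suc k) 0 d = 0"
  by (simp add: collision_moment_def walk_integral_def walks_0 collisions_def)

lemma collision_moment_nonneg: "0 \<le> collision_moment k N d"
  unfolding collision_moment_def by (intro walk_integral_nonneg) simp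

definition int_binomial :: "nat \<Rightarrow> int \<Rightarrow> real" where
  "int_binomial n j = (if 0 \<le> j \<and> j \<le> int n then real (n choose nat j) else 0)"

lemma int_binomial_Suc: "int_binomial (Suc n) j = int_binomial n (j - 1) + int_binomial n j"
proof (cases "j \<le> 0")
  case True
  then show ?thesis by (cases "j = 0") (auto simp: int_binomial_def)
next
  case False
  define i where "i = nat j - 1"
  have i: "j = int (Suc i)" "nat j = Suc i" "nat (j - 1) = i" using False by (auto simp: i_def)
  show ?thesis
  proof (cases "Suc i \<le> n")
    case False
    then have "Suc i = Suc n \<or> Suc i > Suc n" by auto
    then show ?thesis using i unfolding int_binomial_def by (auto simp: binomial_eq_0)
  qed (use i in \<open>simp add: int_binomial_def\<close>)
qed

text \<open>The law of the difference of two independent \<open>m\<close>-step walks: its increments are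
  \<open>-2, 0, 2\<close> with probabilities \<open>1/4, 1/2, 1/4\<close>, which is the recursion \<open>diff_law_Suc\<close>.\<close>
definition diff_law :: "nat \<Rightarrow> int \<Rightarrow> real" where
  "diff_law m d = (if even d then int_binomial (2 * m) (int m + d div 2) / 4 ^ m else 0)"

lemma diff_law_0: "diff_law 0 d = of_bool (d = 0)"
  by (auto simp: diff_law_def int_binomial_def)

lemma diff_law_nonneg: "0 \<le> diff_law m d"
  by (auto simp: diff_law_def int_binomial_def)

lemma diff_law_Suc:
  "diff_law (Suc m) d = (2 * diff_law m d + diff_law m (d - 2) + diff_law m (d + 2)) / 4"
proof (cases "even d")
  case True
  then obtain j where j: "d = 2 * j" by auto
  have "int_binomial (Suc (Suc (2 * m))) (int (Suc m) + j) =
      int_binomial (2 * m) (int m + j - 1) + 2 * int_binomial (2 * m) (int m + j)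
      + int_binomial (2 * m) (int m + j + 1)"
    by (simp only: int_binomial_Suc) (simp add: algebra_simps)
  moreover have "(d - 2) div 2 = j - 1" "(d + 2) div 2 = j + 1" using j by auto
  ultimately show ?thesis using j by (simp add: diff_law_def field_simps)
qed (simp add: diff_law_def)

lemma collision_moment_Suc_Suc:
  "collision_moment (Suc k) (Suc N) d =
     (2 * collision_moment (Suc k) N d + collision_moment (Suc k) N (d - 2)
      + collision_moment (Suc k) N (d + 2)) / 4 + diff_law 1 d * collision_moment k N 0"
proof -
  define C where "C e w w' = real (collisions N e w w' choose Suc k)" for e w w'
  define C0 where "C0 w w' = real (collisions N 0 w w' choose k)" for w w'
  have step: "real (collisions (Suc N) d (walk_cons N s w) (walk_cons N s' w') choose Suc k)
      = C (d + s - s') w w' + of_bool (s' = s + d) * C0 w w'"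
    if "w \<in> walks N" "w' \<in> walks N" for s s' w w'
    using that by (auto simp: collisions_walk_cons C_def C0_def)
  have "collision_moment (Suc k) (Suc N) d = walk_integral N (\<lambda>w. walk_integral N (\<lambda>w'.
      (2 * C d w w' + C (d - 2) w w' + C (d + 2) w w') / 4
       + (2 * of_bool (d = 0) + of_bool (d = 2) + of_bool (d = -2)) / 4 * C0 w w'))"
    unfolding collision_moment_def walk_integral_Suc_pair
    by (intro walk_integral_cong) (simp add: step add_divide_distrib algebra_simps)
  also have "\<dots> = (2 * collision_moment (Suc k) N d + collision_moment (Suc k) N (d - 2)
      + collision_moment (Suc k) N (d + 2)) / 4
      + (2 * of_bool (d = 0) + of_bool (d = 2) + of_bool (d = -2)) / 4 * collision_moment k N 0"
    by (simp only: collision_moment_def walk_integral_add walk_integral_divide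
        walk_integral_mult_left C_def C0_def)
  also have "(2 * of_bool (d = 0) + of_bool (d = 2) + of_bool (d = -2)) / 4 = diff_law 1 d"
    by (simp add: diff_law_Suc diff_law_0)
  finally show ?thesis .
qed

text \<open>Decomposing at the first of the \<open>k + 1\<close> chosen collision times \<open>m\<close>: the difference of
  the walks reaches \<open>0\<close> at time \<open>m\<close> with probability \<open>diff_law m d\<close>, and afterwards the walks
  start afresh from a common point.\<close>
lemma collision_moment_Suc:
  "collision_moment (Suc k) N d = (\<Sum>m=1..N. diff_law m d * collision_moment k (N - m) 0)"
proof (induction N arbitrary: d)
  case (Suc N)
  define X where "X m = collision_moment k (N - m) 0" for m
  have "collision_moment (Suc k) (Suc N) d =
      (\<Sum>m=1..N. (2 * diff_law m d + diff_law m (d - 2) + diff_law m (d + 2)) / 4 * X m)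
      + diff_law 1 d * collision_moment k N 0"
    unfolding collision_moment_Suc_Suc Suc.IH X_def
    by (simp add: sum.distrib sum_distrib_left sum_distrib_right sum_divide_distrib algebra_simps
        add_divide_distrib)
  also have "\<dots> = (\<Sum>m=Suc 1..Suc N. diff_law m d * collision_moment k (Suc N - m) 0)
      + diff_law 1 d * collision_moment k N 0"
    by (simp only: sum.shift_bounds_cl_Suc_ivl diff_law_Suc X_def diff_Suc_Suc)
  also have "\<dots> = (\<Sum>m=1..Suc N. diff_law m d * collision_moment k (Suc N - m) 0)"
    by (simp add: sum.atLeast_Suc_atMost)
  finally show ?case .
qed simp

lemma diff_law_0_eq: "diff_law m 0 = fact (2 * m) / (fact m ^ 2 * 4 ^ m)"
  by (simp add: diff_law_def int_binomial_def binomial_fact power2_eq_square)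

lemma diff_law_Suc_0: "diff_law (Suc m) 0 = diff_law m 0 * (2 * real m + 1) / (2 * real m + 2)"
proof -
  define F G Q x where "F = (fact (2 * m) :: real)" and "G = (fact m ^ 2 :: real)"
    and "Q = (4 :: real) ^ m" and "x = real m + 1"
  have pos: "G > 0" "Q > 0" "x > 0" by (simp_all add: G_def Q_def x_def)
  have "fact (2 * Suc m) = 2 * x * (2 * x - 1) * F"
    by (simp add: F_def x_def algebra_simps)
  moreover have "fact (Suc m) ^ 2 = x ^ 2 * G"
    by (simp add: G_def x_def power_mult_distrib)
  moreover have
    "2 * x * (2 * x - 1) * F / (x ^ 2 * G * (4 * Q)) = F / (G * Q) * (2 * x - 1) / (2 * x)"
    using pos by (simp add: field_simps power2_eq_square)
  ultimately show ?thesis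
    unfolding diff_law_0_eq
    by (simp add: F_def G_def Q_def x_def power_Suc mult.assoc algebra_simps)
qed

lemma diff_law_0_sq_le: "diff_law m 0 ^ 2 * (2 * real m + 1) \<le> 1"
proof (induction m)
  case (Suc m)
  have "diff_law (Suc m) 0 ^ 2 * (2 * real (Suc m) + 1)
      = diff_law m 0 ^ 2 * (2 * real m + 1)
        * ((2 * real m + 1) * (2 * real m + 3) / (2 * real m + 2) ^ 2)"
    unfolding diff_law_Suc_0 by (simp add: field_simps power2_eq_square)
  also have "\<dots> \<le> 1 * 1"
  proof (rule mult_mono)
    have "(2 * real m + 1) * (2 * real m + 3) \<le> (2 * real m + 2) ^ 2"
      by (simp add: power2_eq_square algebra_simps)
    then show "(2 * real m + 1) * (2 * real m + 3) / (2 * real m + 2) ^ 2 \<le> 1"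
      by (simp add: divide_le_eq_1_pos)
  qed (use Suc in auto)
  finally show ?case by simp
qed (simp add: diff_law_0)

lemma diff_law_0_le:
  assumes "m \<ge> 1"
  shows "diff_law m 0 \<le> 1 / sqrt m"
proof -
  have "(diff_law m 0 * sqrt m) ^ 2 \<le> diff_law m 0 ^ 2 * (2 * real m + 1)"
    by (simp add: power_mult_distrib mult_left_mono)
  then have "(diff_law m 0 * sqrt m) ^ 2 \<le> 1" using diff_law_0_sq_le[of m] by linarith
  then have "diff_law m 0 * sqrt m \<le> 1" by (simp add: abs_square_le_1)
  then show ?thesis using assms by (simp add: field_simps)
qed

lemma sum_inverse_sqrt_le: "(\<Sum>m=1..N. 1 / sqrt (real m)) \<le> 2 * sqrt N"
proof (induction N)
  case (Suc N)
  define a where "a = sqrt N"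
  define b where "b = sqrt (Suc N)"
  have "b > 0" "a \<ge> 0" "b ^ 2 = a ^ 2 + 1" by (simp_all add: a_def b_def)
  moreover have "2 * a * b \<le> a ^ 2 + b ^ 2" using sum_squares_bound[of a b] .
  ultimately have "2 * a + 1 / b \<le> 2 * b"
    by (simp add: field_simps power2_eq_square)
  then show ?case using Suc by (simp add: a_def b_def)
qed simp

lemma collision_moment_le: "collision_moment k N 0 \<le> (2 * sqrt N) ^ k"
proof (induction k arbitrary: N)
  case (Suc k)
  have "collision_moment (Suc k) N 0 \<le> (\<Sum>m=1..N. diff_law m 0 * (2 * sqrt N) ^ k)"
    unfolding collision_moment_Suc
  proof (rule sum_mono)
    fix m assume "m \<in> {1..N}"
    have "collision_moment k (N - m) 0 \<le> (2 * sqrt N) ^ k"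
      using Suc.IH[of "N - m"] by (rule order.trans) (intro power_mono, auto)
    then show "diff_law m 0 * collision_moment k (N - m) 0 \<le> diff_law m 0 * (2 * sqrt N) ^ k"
      by (intro mult_left_mono diff_law_nonneg)
  qed
  also have "\<dots> \<le> (\<Sum>m=1..N. 1 / sqrt (real m)) * (2 * sqrt N) ^ k"
    unfolding sum_distrib_right[symmetric] by (intro mult_right_mono sum_mono diff_law_0_le) auto
  also have "\<dots> \<le> 2 * sqrt N * (2 * sqrt N) ^ k"
    by (intro mult_right_mono sum_inverse_sqrt_le) auto
  finally show ?case by simp
qed simp

section \<open>Moments of the collision weight\<close>

lemma walk_integral_pow_collisions:
  "walk_integral N (\<lambda>w. walk_integral N (\<lambda>w'. (1 + x) ^ collisions N 0 w w')) =
     (\<Sum>k\<le>N. x ^ k * collision_moment k N 0)"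
proof -
  have "(1 + x) ^ L = (\<Sum>k\<le>N. x ^ k * real (L choose k))" if "L \<le> N" for L
  proof -
    have "(1 + x) ^ L = (\<Sum>k\<le>L. x ^ k * real (L choose k))"
      using binomial_ring[of x 1 L] by (simp add: add.commute mult.commute)
    also have "\<dots> = (\<Sum>k\<le>N. x ^ k * real (L choose k))"
      using that by (intro sum.mono_neutral_left) auto
    finally show ?thesis .
  qed
  then show ?thesis
    by (simp add: collisions_le walk_integral_sum walk_integral_mult_left collision_moment_def)
qed

lemma walk_integral_pow_collisions_le:
  assumes "x \<ge> 0"
  shows "walk_integral N (\<lambda>w. walk_integral N (\<lambda>w'. (1 + x) ^ collisions N 0 w w')) \<le>
           (\<Sum>k\<le>N. (2 * x * sqrt N) ^ k)"
  unfolding walk_integral_pow_collisions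
proof (rule sum_mono)
  fix k
  have "x ^ k * collision_moment k N 0 \<le> x ^ k * (2 * sqrt N) ^ k"
    using assms by (intro mult_left_mono collision_moment_le) auto
  then show "x ^ k * collision_moment k N 0 \<le> (2 * x * sqrt N) ^ k"
    by (simp add: power_mult_distrib mult_ac)
qed

lemma walk_integral_pow_collisions_minus_one_sq:
  "walk_integral N (\<lambda>w. walk_integral N (\<lambda>w'. ((1 + t) ^ collisions N 0 w w' - 1) ^ 2)) =
     (\<Sum>k=1..N. ((2 * t + t ^ 2) ^ k - 2 * t ^ k) * collision_moment k N 0)"
proof -
  have sq: "((1 + t) ^ n - 1) ^ 2 = (1 + (2 * t + t ^ 2)) ^ n - 2 * (1 + t) ^ n + 1" for n
  proof -
    have "(1 + (2 * t + t ^ 2)) ^ n = ((1 + t) ^ 2) ^ n"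
      by (simp add: power2_eq_square algebra_simps)
    then show ?thesis by (simp add: power2_diff power_mult[symmetric] mult.commute)
  qed
  have "(\<Sum>k\<le>N. f k) = f 0 + (\<Sum>k=1..N. f k)" for f :: "nat \<Rightarrow> real"
    by (simp add: atMost_atLeast0 sum.atLeast_Suc_atMost)
  then show ?thesis
    by (simp add: sq walk_integral_add walk_integral_diff walk_integral_mult_left
        walk_integral_pow_collisions sum_subtractf sum_distrib_left algebra_simps)
qed

lemma sqrt_sum_powers_le:
  fixes b :: real
  assumes "b \<ge> 0"
  shows "sqrt (\<Sum>k=2..N. b ^ k) \<le> (\<Sum>k=1..N. b ^ k)"
proof (cases "N = 0")
  case False
  define T where "T = (\<Sum>k=1..N. b ^ k)"
  have T0: "0 \<le> T" using assms by (auto simp: T_def intro: sum_nonneg)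
  have bT: "b \<le> T"
    using member_le_sum[of 1 "{1..N}" "\<lambda>k. b ^ k"] assms False by (simp add: T_def)
  have "(\<Sum>k=2..N. b ^ k) \<le> (\<Sum>k=Suc 1..Suc N. b ^ k)"
    using assms by (intro sum_mono2) auto
  also have "\<dots> = b * T" by (simp only: sum.shift_bounds_cl_Suc_ivl power_Suc T_def sum_distrib_left)
  also have "\<dots> \<le> T ^ 2" using bT T0 by (simp add: power2_eq_square mult_right_mono)
  finally show ?thesis using T0 by (simp add: T_def real_le_lsqrt)
qed simp

lemma sqrt_collision_variance_le:
  assumes t: "t \<ge> 0" and N: "N \<ge> 1" and small: "t * sqrt N < 1"
  shows "sqrt (\<Sum>k=1..N. ((2 * t + t ^ 2) ^ k - 2 * t ^ k) * collision_moment k N 0)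
           \<le> (\<Sum>k=1..N. (8 * t * sqrt N) ^ k)"
proof -
  define y where "y = t * sqrt N"
  have y0: "y \<ge> 0" using t by (simp add: y_def)
  have sqrtN: "1 \<le> sqrt N" using N by simp
  then have "sqrt N * 1 \<le> sqrt N * sqrt N" by (intro mult_left_mono) auto
  then have sqrtN_le: "sqrt N \<le> N" by simp
  have "t \<le> y" using t sqrtN by (simp add: y_def mult_le_cancel_left1)
  then have t3: "2 * t + t ^ 2 \<le> 3 * t"
    using small t by (simp add: y_def power2_eq_square mult_left_le)
  have first: "((2 * t + t ^ 2) - 2 * t) * collision_moment 1 N 0 \<le> 2 * y ^ 2"
  proof -
    have "((2 * t + t ^ 2) - 2 * t) * collision_moment 1 N 0 \<le> t ^ 2 * (2 * sqrt N)"
      using collision_moment_le[of 1 N] by (simp add: mult_left_mono)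
    also have "\<dots> \<le> t ^ 2 * (2 * N)" using sqrtN_le by (simp add: mult_left_mono)
    finally show ?thesis by (simp add: y_def power_mult_distrib)
  qed
  have rest: "((2 * t + t ^ 2) ^ k - 2 * t ^ k) * collision_moment k N 0 \<le> (6 * y) ^ k" for k
  proof -
    have "((2 * t + t ^ 2) ^ k - 2 * t ^ k) * collision_moment k N 0
        \<le> (2 * t + t ^ 2) ^ k * (2 * sqrt N) ^ k"
      using t collision_moment_nonneg[of k N 0] collision_moment_le[of k N]
      by (intro mult_mono) auto
    also have "\<dots> = ((2 * t + t ^ 2) * (2 * sqrt N)) ^ k" by (rule power_mult_distrib[symmetric])
    also have "\<dots> \<le> (6 * y) ^ k"
    proof (rule power_mono)
      have "(2 * t + t ^ 2) * sqrt N \<le> 3 * t * sqrt N" using t3 by (simp add: mult_right_mono)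
      then show "(2 * t + t ^ 2) * (2 * sqrt N) \<le> 6 * y" unfolding y_def by argo
    qed (use t in simp)
    finally show ?thesis .
  qed
  have "(\<Sum>k=1..N. ((2 * t + t ^ 2) ^ k - 2 * t ^ k) * collision_moment k N 0)
      = ((2 * t + t ^ 2) - 2 * t) * collision_moment 1 N 0
        + (\<Sum>k=2..N. ((2 * t + t ^ 2) ^ k - 2 * t ^ k) * collision_moment k N 0)"
    using N by (simp add: sum.atLeast_Suc_atMost numeral_2_eq_2)
  also have "\<dots> \<le> 2 * y ^ 2 + (\<Sum>k=2..N. (6 * y) ^ k)"
    by (intro add_mono first sum_mono rest)
  finally have "sqrt (\<Sum>k=1..N. ((2 * t + t ^ 2) ^ k - 2 * t ^ k) * collision_moment k N 0)
      \<le> sqrt (2 * y ^ 2) + sqrt (\<Sum>k=2..N. (6 * y) ^ k)"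
    using y0 by (intro order.trans[OF real_sqrt_le_mono sqrt_add_le_add_sqrt])
      (auto intro: sum_nonneg)
  also have "\<dots> \<le> 2 * y + (\<Sum>k=1..N. (6 * y) ^ k)"
  proof (rule add_mono)
    have "sqrt 2 \<le> 2" by (simp add: real_sqrt_le_iff[of 2 4, simplified])
    then show "sqrt (2 * y ^ 2) \<le> 2 * y" using y0 by (simp add: real_sqrt_mult mult_right_mono)
    show "sqrt (\<Sum>k=2..N. (6 * y) ^ k) \<le> (\<Sum>k=1..N. (6 * y) ^ k)"
      using y0 by (intro sqrt_sum_powers_le) simp
  qed
  also have "\<dots> \<le> (\<Sum>k=1..N. (8 * y) ^ k)"
  proof -
    have "(6 * y) ^ k \<le> (8 * y) ^ k" for k using y0 by (intro power_mono) auto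
    then have "(8 * y) ^ 1 - (6 * y) ^ 1 \<le> (\<Sum>k=1..N. (8 * y) ^ k - (6 * y) ^ k)"
      using N by (intro member_le_sum) auto
    then show ?thesis by (simp add: sum_subtractf)
  qed
  finally show ?thesis by (simp add: y_def mult.assoc)
qed

lemma walk_integral_pair_cauchy_schwarz:
  "walk_integral N (\<lambda>w. walk_integral N (\<lambda>w'. f w w' * g w w')) \<le>
     sqrt (walk_integral N (\<lambda>w. walk_integral N (\<lambda>w'. f w w' ^ 2)))
     * sqrt (walk_integral N (\<lambda>w. walk_integral N (\<lambda>w'. g w w' ^ 2)))"
proof -
  have pair: "walk_integral N (\<lambda>w. walk_integral N (\<lambda>w'. F w w')) =
      (\<Sum>p\<in>walks N \<times> walks N. F (fst p) (snd p)) / sqrt (4 ^ N) ^ 2" for F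
    by (simp add: walk_integral_def sum.cartesian_product sum_divide_distrib[symmetric]
        power_mult_distrib[symmetric] case_prod_beta)
  have "(\<Sum>p\<in>walks N \<times> walks N. f (fst p) (snd p) * g (fst p) (snd p))
      \<le> (\<Sum>p\<in>walks N \<times> walks N. \<bar>f (fst p) (snd p)\<bar> * \<bar>g (fst p) (snd p)\<bar>)"
    by (intro sum_mono) (simp add: abs_mult[symmetric])
  also have "\<dots> \<le> L2_set (\<lambda>p. f (fst p) (snd p)) (walks N \<times> walks N)
      * L2_set (\<lambda>p. g (fst p) (snd p)) (walks N \<times> walks N)"
    by (rule L2_set_mult_ineq)
  finally show ?thesis
    unfolding pair L2_set_def by (simp add: real_sqrt_divide divide_right_mono)
qed

lemma walk_integral_weighted_pow_collisions_small:
  assumes t: "t \<ge> 0" and N: "N \<ge> 1" and small: "t * sqrt N < 1"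
  shows "walk_integral N (\<lambda>w. walk_integral N (\<lambda>w'.
           (1 + t) ^ collisions N 0 w w' * (real_of_int (w N) ^ 2 * real_of_int (w' N) ^ 2)))
         \<le> real N ^ 2 * (1 + 3 * (\<Sum>k=1..N. (8 * t * sqrt N) ^ k))"
proof -
  define r where "r w = real_of_int (w N) ^ 2" for w :: "nat \<Rightarrow> int"
  define a where "a w w' = (1 + t) ^ collisions N 0 w w' - 1" for w w'
  have r_int: "walk_integral N r = N"
    by (simp add: r_def[abs_def] walk_integral_endpoint_sq)
  have r2_int: "walk_integral N (\<lambda>w. r w ^ 2) = 3 * real N ^ 2 - 2 * real N"
    by (simp add: r_def walk_integral_endpoint_pow4 flip: power_mult)
  have "walk_integral N (\<lambda>w. walk_integral N (\<lambda>w'. a w w' * (r w * r w')))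
      \<le> sqrt (walk_integral N (\<lambda>w. walk_integral N (\<lambda>w'. a w w' ^ 2)))
        * sqrt (walk_integral N (\<lambda>w. walk_integral N (\<lambda>w'. (r w * r w') ^ 2)))"
    by (rule walk_integral_pair_cauchy_schwarz)
  also have "\<dots> \<le> (\<Sum>k=1..N. (8 * t * sqrt N) ^ k) * (3 * real N ^ 2)"
  proof (rule mult_mono)
    show "sqrt (walk_integral N (\<lambda>w. walk_integral N (\<lambda>w'. a w w' ^ 2)))
        \<le> (\<Sum>k=1..N. (8 * t * sqrt N) ^ k)"
      unfolding a_def walk_integral_pow_collisions_minus_one_sq
      using sqrt_collision_variance_le[OF t N small] .
    have "walk_integral N (\<lambda>w. walk_integral N (\<lambda>w'. (r w * r w') ^ 2)) =
        (3 * real N ^ 2 - 2 * real N) ^ 2"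
      unfolding power_mult_distrib walk_integral_mult_left walk_integral_mult_right r2_int
      by (simp add: power2_eq_square)
    moreover have "0 \<le> 3 * real N ^ 2 - 2 * real N" using N by (simp add: power2_eq_square)
    ultimately show
      "sqrt (walk_integral N (\<lambda>w. walk_integral N (\<lambda>w'. (r w * r w') ^ 2))) \<le> 3 * real N ^ 2"
      by simp
  qed (use t in \<open>auto intro!: sum_nonneg real_sqrt_ge_zero walk_integral_nonneg\<close>)
  moreover have "walk_integral N (\<lambda>w. walk_integral N (\<lambda>w'. r w * r w')) = real N ^ 2"
    by (simp add: walk_integral_mult_left walk_integral_mult_right r_int power2_eq_square)
  moreover have
    "(1 + t) ^ collisions N 0 w w' * (r w * r w') = r w * r w' + a w w' * (r w * r w')" for w w'
    by (simp add: a_def algebra_simps)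
  ultimately show ?thesis
    by (simp add: r_def[symmetric] walk_integral_add algebra_simps)
qed

lemma square_mult_Suc_mult_two_pow_le: "real N ^ 2 * (real N + 1) * 2 ^ N \<le> 16 ^ N"
proof -
  have "N < 2 ^ N" "N + 1 \<le> 2 ^ N" by (simp_all add: less_exp Suc_le_eq)
  then have "N ^ 2 * (N + 1) * 2 ^ N \<le> (2 ^ N) ^ 2 * 2 ^ N * (2 ^ N :: nat)"
    by (intro mult_mono power_mono) auto
  also have "\<dots> = (2 ^ N) ^ 4" by (simp add: power2_eq_square power4_eq_xxxx)
  also have "\<dots> = (2 ^ 4) ^ N" by (simp only: power_mult[symmetric] mult.commute)
  finally have "real (N ^ 2 * (N + 1) * 2 ^ N) \<le> real (16 ^ N)" by (simp only: of_nat_le_iff) simp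
  then show ?thesis by (simp add: algebra_simps)
qed

lemma walk_integral_weighted_pow_collisions_le:
  assumes t: "t \<ge> 0" and N: "N \<ge> 1"
  shows "walk_integral N (\<lambda>w. walk_integral N (\<lambda>w'.
           (1 + t) ^ collisions N 0 w w' * (real_of_int (w N) ^ 2 * real_of_int (w' N) ^ 2)))
         \<le> real N ^ 2 * (\<Sum>n=0..N. (32 * t * sqrt N) ^ n)"
proof (cases "t * sqrt N < 1")
  case True
  have "3 * (8 * t * sqrt N) ^ k \<le> (32 * t * sqrt N) ^ k" if "k \<ge> 1" for k
  proof -
    have "(3 :: real) \<le> 4 ^ k" using power_increasing[OF that, of "4::real"] by simp
    then have "3 * (8 * t * sqrt N) ^ k \<le> 4 ^ k * (8 * t * sqrt N) ^ k"
      using t by (intro mult_right_mono) auto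
    also have "\<dots> = (4 * (8 * t * sqrt N)) ^ k" by (rule power_mult_distrib[symmetric])
    finally show ?thesis by (simp add: mult.assoc)
  qed
  then have "1 + 3 * (\<Sum>k=1..N. (8 * t * sqrt N) ^ k) \<le> 1 + (\<Sum>k=1..N. (32 * t * sqrt N) ^ k)"
    unfolding sum_distrib_left by (intro add_left_mono sum_mono) auto
  also have "\<dots> = (\<Sum>n=0..N. (32 * t * sqrt N) ^ n)" by (simp add: sum.atLeast_Suc_atMost)
  finally have "real N ^ 2 * (1 + 3 * (\<Sum>k=1..N. (8 * t * sqrt N) ^ k))
      \<le> real N ^ 2 * (\<Sum>n=0..N. (32 * t * sqrt N) ^ n)"
    by (intro mult_left_mono) auto
  with walk_integral_weighted_pow_collisions_small[OF t N True] show ?thesis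
    by (rule order.trans)
next
  case False
  define y where "y = t * sqrt N"
  have "walk_integral N (\<lambda>w. walk_integral N (\<lambda>w'.
           (1 + t) ^ collisions N 0 w w' * (real_of_int (w N) ^ 2 * real_of_int (w' N) ^ 2)))
      \<le> walk_integral N (\<lambda>w. walk_integral N (\<lambda>w'. (1 + t) ^ collisions N 0 w w' * (real N ^ 2 * real N ^ 2)))"
    using t by (intro walk_integral_mono mult_left_mono mult_mono walk_endpoint_sq_le) auto
  also have "\<dots> = walk_integral N (\<lambda>w. walk_integral N (\<lambda>w'. (1 + t) ^ collisions N 0 w w'))
      * (real N ^ 2 * real N ^ 2)"
    by (simp only: walk_integral_mult_right)
  also have "\<dots> \<le> (\<Sum>k\<le>N. (2 * y) ^ k) * (real N ^ 2 * real N ^ 2)"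
    using walk_integral_pow_collisions_le[OF t, of N]
    by (intro mult_right_mono) (auto simp: y_def mult.assoc)
  also have "\<dots> \<le> ((real N + 1) * (2 * y) ^ N) * (real N ^ 2 * real N ^ 2)"
  proof -
    have "(\<Sum>k\<le>N. (2 * y) ^ k) \<le> (\<Sum>k\<le>N. (2 * y) ^ N)"
      using False by (intro sum_mono power_increasing) (auto simp: y_def)
    then show ?thesis by (intro mult_right_mono) (auto simp: add.commute)
  qed
  also have "\<dots> = real N ^ 2 * ((real N ^ 2 * (real N + 1) * 2 ^ N) * y ^ N)"
    by (simp add: power_mult_distrib mult_ac)
  also have "\<dots> \<le> real N ^ 2 * (32 ^ N * y ^ N)"
  proof -
    have "real N ^ 2 * (real N + 1) * 2 ^ N \<le> 32 ^ N"
      using square_mult_Suc_mult_two_pow_le[of N] power_mono[of "16::real" 32 N] by simp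
    moreover have "0 \<le> y" using False by (simp add: y_def)
    ultimately show ?thesis by (simp add: mult_left_mono mult_right_mono)
  qed
  also have "\<dots> \<le> real N ^ 2 * (\<Sum>n=0..N. (32 * t * sqrt N) ^ n)"
  proof -
    have "32 ^ N * y ^ N = (32 * t * sqrt N) ^ N" by (simp add: y_def power_mult_distrib mult.assoc)
    also have "\<dots> \<le> (\<Sum>n=0..N. (32 * t * sqrt N) ^ n)" using t by (intro member_le_sum) auto
    finally show ?thesis by (simp add: mult_left_mono)
  qed
  finally show ?thesis .
qed

section \<open>The random environment\<close>

lemma prod_mult_prod_eq:
  fixes f :: "'a \<Rightarrow> 'b::comm_monoid_mult"
  assumes "finite A" "finite B"
  shows "(\<Prod>i\<in>A. f i) * (\<Prod>i\<in>B. f i) = (\<Prod>i\<in>A \<union> B. if i \<in> A \<inter> B then f i ^ 2 else f i)"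
proof -
  have "(A \<union> B) \<inter> (A \<inter> B) = A \<inter> B" by blast
  then have restrict: "(\<Prod>i\<in>A \<union> B. if i \<in> A \<inter> B then f i else 1) = (\<Prod>i\<in>A \<inter> B. f i)"
    using prod.inter_restrict[of "A \<union> B" f "A \<inter> B"] assms by simp
  have "(\<Prod>i\<in>A \<union> B. if i \<in> A \<inter> B then f i ^ 2 else f i)
      = (\<Prod>i\<in>A \<union> B. f i) * (\<Prod>i\<in>A \<union> B. if i \<in> A \<inter> B then f i else 1)"
    by (subst prod.distrib[symmetric]) (auto intro: prod.cong simp: power2_eq_square)
  also have "\<dots> = (\<Prod>i\<in>A. f i) * (\<Prod>i\<in>B. f i)"
    unfolding restrict using assms by (rule prod.union_inter)
  finally show ?thesis ..
qed

context prob_space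
begin

lemma integrable_comp_sign:
  fixes X :: "'a \<Rightarrow> real" and g :: "real \<Rightarrow> real"
  assumes X: "X \<in> measurable M (count_space UNIV)" and sign: "\<forall>q\<in>space M. X q \<in> {-1, 1}"
  shows "integrable M (\<lambda>q. g (X q))"
proof (rule integrable_const_bound[where B = "\<bar>g (-1)\<bar> + \<bar>g 1\<bar>"])
  show "AE q in M. norm (g (X q)) \<le> \<bar>g (-1)\<bar> + \<bar>g 1\<bar>"
    using sign by (intro AE_I2) auto
  show "(\<lambda>q. g (X q)) \<in> borel_measurable M"
    by (rule measurable_compose[OF X]) simp
qed

lemma integral_sign:
  fixes X :: "'a \<Rightarrow> real"
  assumes X: "X \<in> measurable M (count_space UNIV)" and sign: "\<forall>q\<in>space M. X q \<in> {-1, 1}"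
    and fair: "measure M {q\<in>space M. X q = 1} = 1 / 2"
  shows "integral\<^sup>L M X = 0"
proof -
  define E where "E = {q\<in>space M. X q = 1}"
  have E: "E \<in> sets M"
    using measurable_sets[OF X, of "{1}"] by (simp add: E_def vimage_def Int_def conj_commute)
  have "integral\<^sup>L M X = integral\<^sup>L M (\<lambda>q. 2 * indicator E q - 1)"
    using sign by (intro Bochner_Integration.integral_cong) (auto simp: E_def indicator_def)
  also have "\<dots> = 2 * measure M E - 1"
  proof -
    have "integrable M (indicator E :: 'a \<Rightarrow> real)"
      using E by (simp add: integrable_indicator_iff less_top[symmetric])
    then show ?thesis using E by (simp add: prob_space)
  qed
  finally show ?thesis using fair by (simp add: E_def)
qed

lemma integral_one_plus_mult_sign:
  fixes X :: "'a \<Rightarrow> real"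
  assumes X: "X \<in> measurable M (count_space UNIV)" and sign: "\<forall>q\<in>space M. X q \<in> {-1, 1}"
    and fair: "measure M {q\<in>space M. X q = 1} = 1 / 2"
  shows "integral\<^sup>L M (\<lambda>q. 1 + a * X q) = 1"
    and "integral\<^sup>L M (\<lambda>q. (1 + a * X q) ^ 2) = 1 + a ^ 2"
proof -
  have "integrable M X" using integrable_comp_sign[OF X sign, of id] by simp
  then show "integral\<^sup>L M (\<lambda>q. 1 + a * X q) = 1"
    using integral_sign[OF X sign fair] by (simp add: prob_space)
  have "integral\<^sup>L M (\<lambda>q. (1 + a * X q) ^ 2) = integral\<^sup>L M (\<lambda>q. 1 + a ^ 2 + 2 * a * X q)"
    using sign
    by (intro Bochner_Integration.integral_cong) (auto simp: power2_eq_square algebra_simps)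
  with \<open>integrable M X\<close> show "integral\<^sup>L M (\<lambda>q. (1 + a * X q) ^ 2) = 1 + a ^ 2"
    using integral_sign[OF X sign fair] by (simp add: prob_space)
qed

text \<open>Independence factorises the expectation over the sites visited by \<open>w\<close> or \<open>w'\<close>: a site
  visited by only one walk contributes \<open>E(1 + a h) = 1\<close>, a common site \<open>E((1 + a h)\<^sup>2) = 1 + a\<^sup>2\<close>.\<close>
lemma integral_walk_weights_product:
  fixes h :: "nat \<times> int \<Rightarrow> 'a \<Rightarrow> real" and a :: real and N :: nat
  assumes ind: "indep_vars (\<lambda>_. count_space UNIV) h UNIV"
    and sign: "\<forall>i. \<forall>q\<in>space M. h i q \<in> {-1, 1}"
    and fair: "\<forall>i. measure M {q\<in>space M. h i q = 1} = 1 / 2"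
  defines "F w q \<equiv> \<Prod>n\<in>{1..N}. 1 + a * h (n, w n) q"
  shows "integrable M (\<lambda>q. F w q * F w' q)"
    and "integral\<^sup>L M (\<lambda>q. F w q * F w' q) = (1 + a ^ 2) ^ collisions N 0 w w'"
proof -
  have h: "h i \<in> measurable M (count_space UNIV)" for i
    using ind by (cases i) (auto simp: indep_vars_def)
  define A B where "A = (\<lambda>n. (n, w n)) ` {1..N}" and "B = (\<lambda>n. (n, w' n)) ` {1..N}"
  have fin: "finite A" "finite B" by (simp_all add: A_def B_def)
  define C where "C = A \<inter> B"
  define G where "G i x = (if i \<in> C then (1 + a * x) ^ 2 else 1 + a * x)" for i x
  have "F w q = (\<Prod>i\<in>A. 1 + a * h i q)" "F w' q = (\<Prod>i\<in>B. 1 + a * h i q)" for q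
    by (simp_all add: F_def A_def B_def prod.reindex inj_on_def)
  then have FF: "F w q * F w' q = (\<Prod>i\<in>A \<union> B. G i (h i q))" for q
    using prod_mult_prod_eq[OF fin] by (simp add: G_def C_def)
  have indG: "indep_vars (\<lambda>_. borel) (\<lambda>i q. G i (h i q)) (A \<union> B)"
    by (rule indep_vars_compose2[OF indep_vars_subset[OF ind subset_UNIV]]) simp
  have intG: "integrable M (\<lambda>q. G i (h i q))" for i
    by (rule integrable_comp_sign[OF h sign[THEN spec]])
  show "integrable M (\<lambda>q. F w q * F w' q)"
    unfolding FF using fin indG intG by (intro indep_vars_integrable) auto
  have EG: "integral\<^sup>L M (\<lambda>q. G i (h i q)) = (if i \<in> C then 1 + a ^ 2 else 1)" for i
    using integral_one_plus_mult_sign[OF h sign[THEN spec] fair[THEN spec]]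
    by (cases "i \<in> C") (simp_all add: G_def)
  have "integral\<^sup>L M (\<lambda>q. F w q * F w' q) = (\<Prod>i\<in>A \<union> B. integral\<^sup>L M (\<lambda>q. G i (h i q)))"
    unfolding FF using fin indG intG by (intro indep_vars_lebesgue_integral) auto
  also have "\<dots> = (1 + a ^ 2) ^ card C"
  proof -
    have "(A \<union> B) \<inter> C = C" by (auto simp: C_def)
    then show ?thesis
      using fin prod.inter_restrict[of "A \<union> B" "\<lambda>_. 1 + a ^ 2" C] by (simp add: EG)
  qed
  also have "C = (\<lambda>n. (n, w n)) ` {n\<in>{1..N}. w' n = w n + 0}"
    by (auto simp: C_def A_def B_def)
  then have "card C = collisions N 0 w w'"
    by (simp add: collisions_def card_image inj_on_def)
  finally show "integral\<^sup>L M (\<lambda>q. F w q * F w' q) = (1 + a ^ 2) ^ collisions N 0 w w'" .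
qed

lemma integral_square_walk_integral:
  assumes "\<And>w w'. w \<in> walks N \<Longrightarrow> w' \<in> walks N \<Longrightarrow> integrable M (\<lambda>q. F w q * F w' q)"
  shows "(\<integral>q. walk_integral N (\<lambda>w. F w q * b w) ^ 2 \<partial>M) =
           walk_integral N (\<lambda>w. walk_integral N (\<lambda>w'. (\<integral>q. F w q * F w' q \<partial>M) * (b w * b w')))"
proof -
  have "walk_integral N (\<lambda>w. F w q * b w) ^ 2 =
      walk_integral N (\<lambda>w. walk_integral N (\<lambda>w'. F w q * F w' q * (b w * b w')))" for q
  proof -
    have "walk_integral N (\<lambda>w. F w q * b w) ^ 2 =
        walk_integral N (\<lambda>w. walk_integral N (\<lambda>w'. (F w q * b w) * (F w' q * b w')))"
      by (simp only: power2_eq_square walk_integral_mult_left walk_integral_mult_right)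
    then show ?thesis by (simp only: mult_ac)
  qed
  then show ?thesis
    using assms by (simp add: walk_integral_def integral_sum integrable_sum)
qed

end

theorem proposition1:
  "\<exists>c1::real. c1 > 0 \<and>
     (\<forall>(Q::'q measure) (h::nat \<times> int \<Rightarrow> 'q \<Rightarrow> real) (c::nat \<Rightarrow> real).
        prob_space Q \<longrightarrow>
        prob_space.indep_vars Q (\<lambda>_. count_space UNIV) h UNIV \<longrightarrow>
        (\<forall>i. \<forall>q\<in>space Q. h i q \<in> {-1, 1}) \<longrightarrow>
        (\<forall>i. measure Q {q\<in>space Q. h i q = 1} = 1/2) \<longrightarrow>
        (\<forall>N. c N > 0) \<longrightarrow>
        ((\<lambda>N. (c N)\<^sup>2 * sqrt (real N)) \<longlonglongrightarrow> 0) \<longrightarrow>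
        (\<forall>N\<ge>1.
           (\<integral>q. (Zpart c h N q)\<^sup>2 \<partial>Q) \<le> (\<Sum>n=0..N. (c1 * (c N)\<^sup>2 * sqrt (real N)) ^ n) \<and>
           (\<integral>q. (Kpart c h N q)\<^sup>2 \<partial>Q) \<le> (real N)\<^sup>2 * (\<Sum>n=0..N. (c1 * (c N)\<^sup>2 * sqrt (real N)) ^ n)))"
proof (intro exI[of _ 32] conjI allI impI)
  fix Q :: "'q measure" and h :: "nat \<times> int \<Rightarrow> 'q \<Rightarrow> real" and c :: "nat \<Rightarrow> real" and N :: nat
  assume "prob_space Q" and ind: "prob_space.indep_vars Q (\<lambda>_. count_space UNIV) h UNIV"
    and sign: "\<forall>i. \<forall>q\<in>space Q. h i q \<in> {-1, 1}"
    and fair: "\<forall>i. measure Q {q\<in>space Q. h i q = 1} = 1/2"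
    and N: "N \<ge> 1"
  interpret prob_space Q by fact
  define F where "F w q = (\<Prod>n\<in>{1..N}. 1 + c N * h (n, w n) q)" for w :: "nat \<Rightarrow> int" and q
  note weights =
    integral_walk_weights_product[OF ind sign fair, where N = N and a = "c N", folded F_def]
  have Z: "(\<integral>q. (Zpart c h N q)\<^sup>2 \<partial>Q) =
      walk_integral N (\<lambda>w. walk_integral N (\<lambda>w'. (1 + (c N)\<^sup>2) ^ collisions N 0 w w'))"
    using integral_square_walk_integral[of N F "\<lambda>_. 1"] weights
    by (simp add: Zpart_def F_def)
  have K: "(\<integral>q. (Kpart c h N q)\<^sup>2 \<partial>Q) =
      walk_integral N (\<lambda>w. walk_integral N (\<lambda>w'.
        (1 + (c N)\<^sup>2) ^ collisions N 0 w w' * (real_of_int (w N) ^ 2 * real_of_int (w' N) ^ 2)))"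
    using integral_square_walk_integral[of N F "\<lambda>w. real_of_int (w N) ^ 2"] weights
    by (simp add: Kpart_def F_def)
  have "(\<Sum>k\<le>N. (2 * (c N)\<^sup>2 * sqrt N) ^ k) \<le> (\<Sum>n=0..N. (32 * (c N)\<^sup>2 * sqrt N) ^ n)"
    by (auto simp: atMost_atLeast0 intro!: sum_mono power_mono)
  with Z walk_integral_pow_collisions_le[of "(c N)\<^sup>2" N]
  show "(\<integral>q. (Zpart c h N q)\<^sup>2 \<partial>Q) \<le> (\<Sum>n=0..N. (32 * (c N)\<^sup>2 * sqrt (real N)) ^ n)"
    by simp
  show "(\<integral>q. (Kpart c h N q)\<^sup>2 \<partial>Q) \<le> (real N)\<^sup>2 * (\<Sum>n=0..N. (32 * (c N)\<^sup>2 * sqrt (real N)) ^ n)"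
    unfolding K using walk_integral_weighted_pow_collisions_le[of "(c N)\<^sup>2" N] N by simp
qed simp

end
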